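(* The symmetry locus $\mathcal S\subset\mathcal M_2\cong\mathbf C^2$ is an algebraic curve of degree three and genus zero in the coordinates $(\sigma_1,\sigma_2)$. It is given parametrically by $$\sigma_1=4k-2+k^{-1},\qquad \sigma_2=4k^2-4k+5-2k^{-1},\qquad k\in\mathbf C\setminus\{0\}.$$ This curve is non-singular except for a cusp at the point $\langle z\mapsto1/z^2\rangle$, which corresponds to $k=-1/2$, $(\sigma_1,\sigma_2)=(-6,12)$.
   Context: $\mathrm{Rat}_2$ is the space of holomorphic degree-$2$ maps of the Riemann sphere; each $f$ has three fixed points counted with multiplicity, with multipliers $\mu_1,\mu_2,\mu_3$ and elementary symmetric functions $\sigma_1,\sigma_2,\sigma_3$. $\mathcal M_2$, the set of Möbius conjugacy classes $\langle f\rangle$, is identified with $\mathbf C^2$ via $(\sigma_1,\sigma_2)$. An automorphism of $f$ is a Möbius transformation $g\neq\mathrm{id}$ with $g\circ f\circ g^{-1}=f$. The symmetry locus $\mathcal S$ is the set of $\langle f\rangle\in\mathcal M_2$ such that $f$ has a non-trivial automorphism; equivalently the set of classes of maps $z\mapsto k(z+z^{-1})$, $k\neq0$. *)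

theory Defs
  imports "HOL-Analysis.Analysis" "HOL-Computational_Algebra.Computational_Algebra"
begin

text \<open>The Riemann sphere is modelled as complex option, None being the point at infinity.\<close>

type_synonym sphere = "complex option"

definition Rat :: "nat \<Rightarrow> (complex poly \<times> complex poly) set" where
  "Rat d = {(P, Q). coprime P Q \<and> max (degree P) (degree Q) = d}"

fun rat_eval :: "complex poly \<times> complex poly \<Rightarrow> sphere \<Rightarrow> sphere" where
  "rat_eval (P, Q) (Some z) =
     (if poly Q z = 0 then None else Some (poly P z / poly Q z))"
| "rat_eval (P, Q) None =
     (if degree Q < degree P then None else Some (coeff P (degree Q) / lead_coeff Q))"

definition moebius :: "(sphere \<Rightarrow> sphere) set" where
  "moebius = rat_eval ` Rat 1"

definition is_automorphism :: "(sphere \<Rightarrow> sphere) \<Rightarrow> (sphere \<Rightarrow> sphere) \<Rightarrow> bool" where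
  "is_automorphism g f \<longleftrightarrow> g \<in> moebius \<and> g \<noteq> id \<and> g \<circ> f \<circ> inv g = f"

text \<open>Finite fixed points of P/Q are the roots of P - z Q, with multiplicity the root order;
  the multiplicity of the fixed point at infinity is (d+1) - degree (P - z Q), i.e. the
  multiplicity of [1:0] as a root of the homogeneous fixed point form of degree d+1.\<close>

definition fixpoly :: "complex poly \<times> complex poly \<Rightarrow> complex poly" where
  "fixpoly f = fst f - [:0, 1:] * snd f"

definition mult_fin :: "complex poly \<times> complex poly \<Rightarrow> complex \<Rightarrow> complex" where
  "mult_fin f z = deriv (\<lambda>w. poly (fst f) w / poly (snd f) w) z"

text \<open>Multiplier at infinity: derivative at 0 of w |-> 1 / f(1/w) (the map in the chart at infinity).\<close>
definition mult_inf :: "complex poly \<times> complex poly \<Rightarrow> complex" where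
  "mult_inf f = deriv (\<lambda>w. if w = 0 then 0 else poly (snd f) (1 / w) / poly (fst f) (1 / w)) 0"

definition fp_multipliers :: "complex poly \<times> complex poly \<Rightarrow> complex multiset" where
  "fp_multipliers f =
     (\<Sum>z\<in>{z. poly (fixpoly f) z = 0}. replicate_mset (order z (fixpoly f)) (mult_fin f z))
     + replicate_mset (max (degree (fst f)) (degree (snd f)) + 1 - degree (fixpoly f)) (mult_inf f)"

text \<open>k-th elementary symmetric function of a multiset (via prod (X + m) = sum e_k X^(n-k)).\<close>
definition esym :: "nat \<Rightarrow> complex multiset \<Rightarrow> complex" where
  "esym k M = coeff (\<Prod>m\<in>#M. [:m, 1:]) (size M - k)"

definition sigma1 :: "complex poly \<times> complex poly \<Rightarrow> complex" where
  "sigma1 f = esym 1 (fp_multipliers f)"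

definition sigma2 :: "complex poly \<times> complex poly \<Rightarrow> complex" where
  "sigma2 f = esym 2 (fp_multipliers f)"

text \<open>The symmetry locus, as a subset of M_2 = C^2 via (sigma1, sigma2).\<close>
definition symmetry_locus :: "(complex \<times> complex) set" where
  "symmetry_locus =
     {(sigma1 f, sigma2 f) | f. f \<in> Rat 2 \<and> (\<exists>g. is_automorphism g (rat_eval f))}"

text \<open>Polynomials in two variables are coefficient functions c i j (coefficient of x^i y^j)
  with finite support.\<close>

definition is_bipoly :: "(nat \<Rightarrow> nat \<Rightarrow> complex) \<Rightarrow> bool" where
  "is_bipoly c \<longleftrightarrow> finite {(i, j). c i j \<noteq> 0}"

definition bpoly_eval :: "(nat \<Rightarrow> nat \<Rightarrow> complex) \<Rightarrow> complex \<Rightarrow> complex \<Rightarrow> complex" where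
  "bpoly_eval c x y = (\<Sum>(i, j)\<in>{(i, j). c i j \<noteq> 0}. c i j * x ^ i * y ^ j)"

definition bdeg :: "(nat \<Rightarrow> nat \<Rightarrow> complex) \<Rightarrow> nat" where
  "bdeg c = Max {i + j | i j. c i j \<noteq> 0}"

definition zero_set :: "(nat \<Rightarrow> nat \<Rightarrow> complex) \<Rightarrow> (complex \<times> complex) set" where
  "zero_set c = {(x, y). bpoly_eval c x y = 0}"

definition singular_pt :: "(nat \<Rightarrow> nat \<Rightarrow> complex) \<Rightarrow> complex \<times> complex \<Rightarrow> bool" where
  "singular_pt c p \<longleftrightarrow>
     bpoly_eval c (fst p) (snd p) = 0 \<and>
     deriv (\<lambda>x. bpoly_eval c x (snd p)) (fst p) = 0 \<and>
     deriv (\<lambda>y. bpoly_eval c (fst p) y) (snd p) = 0"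

definition dir_deriv :: "nat \<Rightarrow> (nat \<Rightarrow> nat \<Rightarrow> complex) \<Rightarrow> complex \<times> complex \<Rightarrow> complex \<times> complex \<Rightarrow> complex" where
  "dir_deriv n c p v = (deriv ^^ n) (\<lambda>t. bpoly_eval c (fst p + t * fst v) (snd p + t * snd v)) 0"

text \<open>(Ordinary) cusp: a singular point whose tangent cone (the quadratic part) is a single
  double line, spanned by v, and where the cubic term along v does not vanish
  (analytically equivalent to y^2 = x^3).\<close>
definition is_cusp :: "(nat \<Rightarrow> nat \<Rightarrow> complex) \<Rightarrow> complex \<times> complex \<Rightarrow> bool" where
  "is_cusp c p \<longleftrightarrow> singular_pt c p \<and>
     (\<exists>v. v \<noteq> (0, 0) \<and> dir_deriv 2 c p v = 0 \<and> dir_deriv 3 c p v \<noteq> 0 \<and>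
          (\<forall>w. dir_deriv 2 c p w = 0 \<longrightarrow> (\<exists>t. w = (t * fst v, t * snd v))))"

end

theory Submission
  imports Defs
begin

text \<open>
  Write a quadratic map as \<open>f = P/Q\<close> with \<open>P = [:p0, p1, p2:]\<close>, \<open>Q = [:q0, q1, q2:]\<close>.
  Its finite fixed points are the roots of \<open>P - z Q\<close>, with multipliers \<open>(P' - z Q')/Q\<close>;
  if \<open>P - z Q\<close> has degree below 3 the missing ones sit at \<open>\<infinity>\<close>, with multiplier \<open>q1/p2\<close>.
  Vieta's formulas then give \<open>\<sigma>1 = N1/R\<close> and \<open>\<sigma>2 = N2/R\<close>, with \<open>R\<close> the resultant of
  \<open>P\<close> and \<open>Q\<close> and explicit polynomials \<open>N1\<close>, \<open>N2\<close> in the coefficients.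

  If a Moebius map \<open>g = (az + b)/(cz + d) \<noteq> id\<close> commutes with \<open>f\<close>, a homogeneous quartic
  form in \<open>(x, y)\<close> vanishes identically. Conjugating by translations and by \<open>z \<mapsto> 1/z\<close>, which
  leave \<open>N1\<close>, \<open>N2\<close>, \<open>R\<close> unchanged, a fixed point of \<open>g\<close> is moved to \<open>\<infinity>\<close> and then \<open>g\<close>
  becomes \<open>z \<mapsto> \<lambda>z\<close> (a translation cannot commute with \<open>f\<close>). Comparing coefficients, the conjugated \<open>f\<close>
  is then odd (\<open>\<lambda> = -1\<close>) or of the form \<open>z \<mapsto> c/z\<^sup>2\<close>, and in both cases \<open>(\<sigma>1, \<sigma>2)\<close> lies on
  the cubic \<open>sym_curve = 0\<close>. Conversely \<open>k(z + 1/z)\<close> commutes with \<open>z \<mapsto> -z\<close> and realises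
  the whole parametrization of this cubic. No conic contains the curve, since restricting a nonzero
  conic to the parametrization gives a nonzero Laurent polynomial in \<open>k\<close>; the only singular point
  is the cusp \<open>(-6, 12)\<close>, coming from \<open>z \<mapsto> 1/z\<^sup>2\<close>.
\<close>

lemma poly_eq_coeffs_degree_le_2:
  fixes p :: "'a::zero poly"
  assumes "degree p \<le> 2"
  shows "p = [:coeff p 0, coeff p 1, coeff p 2:]"
proof (rule poly_eqI)
  fix n show "coeff p n = coeff [:coeff p 0, coeff p 1, coeff p 2:] n"
    using assms coeff_eq_0[of p n]
    by (cases n; cases "n - 1"; cases "n - 2") (auto simp: coeff_pCons numeral_2_eq_2 split: nat.splits)
qed

lemma poly_eq_coeffs_degree_le_1:
  fixes p :: "'a::zero poly"
  assumes "degree p \<le> 1"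
  shows "p = [:coeff p 0, coeff p 1:]"
proof (rule poly_eqI)
  fix n show "coeff p n = coeff [:coeff p 0, coeff p 1:] n"
    using assms coeff_eq_0[of p n]
    by (cases n; cases "n - 1") (auto simp: coeff_pCons split: nat.splits)
qed

lemma coprime_iff_no_common_root:
  fixes P Q :: "'a::alg_closed_field poly"
  shows "coprime P Q \<longleftrightarrow> (\<forall>z. poly P z = 0 \<longrightarrow> poly Q z \<noteq> 0)"
proof
  assume cop: "coprime P Q"
  show "\<forall>z. poly P z = 0 \<longrightarrow> poly Q z \<noteq> 0"
  proof (intro allI impI notI)
    fix z assume "poly P z = 0" "poly Q z = 0"
    then have "is_unit [:-z, 1:]"
      using coprime_common_divisor[OF cop] by (simp add: poly_eq_0_iff_dvd)
    then show False by (simp add: is_unit_pCons_iff)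
  qed
next
  assume no_common: "\<forall>z. poly P z = 0 \<longrightarrow> poly Q z \<noteq> 0"
  show "coprime P Q"
  proof (rule coprimeI)
    fix d assume d: "d dvd P" "d dvd Q"
    have "degree d = 0"
    proof (rule ccontr)
      assume "degree d \<noteq> 0"
      then obtain z where "poly d z = 0" using alg_closed_imp_poly_has_root by blast
      then show False using d no_common by (metis dvd_trans poly_eq_0_iff_dvd)
    qed
    moreover have "d \<noteq> 0" using d no_common by auto
    ultimately show "is_unit d" by (simp add: is_unit_iff_degree)
  qed
qed

lemma proots_sum_replicate_order:
  fixes F :: "'a::idom poly"
  assumes "F \<noteq> 0"
  shows "(\<Sum>z\<in>{z. poly F z = 0}. replicate_mset (order z F) (h z)) = image_mset h (proots F)"
proof (rule multiset_eqI)
  fix y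
  have fin: "finite {z. poly F z = 0}" using assms poly_roots_finite by blast
  have "count (\<Sum>z\<in>{z. poly F z = 0}. replicate_mset (order z F) (h z)) y
      = (\<Sum>z\<in>h -` {y} \<inter> {z. poly F z = 0}. order z F)"
    using fin by (simp add: count_sum sum.inter_filter[symmetric]) (rule sum.cong, auto)
  also have "\<dots> = count (image_mset h (proots F)) y"
    using assms by (simp add: count_image_mset)
  finally show "count (\<Sum>z\<in>{z. poly F z = 0}. replicate_mset (order z F) (h z)) y
      = count (image_mset h (proots F)) y" .
qed

lemma size_mset_2_obtain:
  assumes "size M = 2"
  obtains a b where "M = {#a, b#}"
  using assms by (metis numeral_2_eq_2 size_mset_SucE size_1_singleton_mset One_nat_def add_mset_add_single add.commute add_mset_commute)

lemma size_mset_3_obtain: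
  assumes "size M = 3"
  obtains a b c where "M = {#a, b, c#}"
proof -
  obtain a M' where "M = {#a#} + M'" "size M' = 2"
    using assms by (metis numeral_3_eq_3 size_mset_SucE numeral_2_eq_2)
  then show ?thesis using size_mset_2_obtain that by (metis add_mset_add_single add.commute)
qed

lemma esym_1_3: "esym 1 {#u, v, w#} = u + v + w"
  and esym_2_3: "esym 2 {#u, v, w#} = u * v + u * w + v * w"
  by (simp_all add: esym_def numeral_eq_Suc algebra_simps)

lemma prod_linear_factors_1:
  fixes a :: "'a::comm_ring_1"
  shows "(\<Prod>z\<in>#{#a#}. [:-z, 1:]) = [:- a, 1:]"
  by simp

lemma prod_linear_factors_2:
  fixes a b :: "'a::comm_ring_1"
  shows "(\<Prod>z\<in>#{#a, b#}. [:-z, 1:]) = [:a * b, - (a + b), 1:]"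
  by (simp add: algebra_simps)

lemma prod_linear_factors_3:
  fixes a b c :: "'a::comm_ring_1"
  shows "(\<Prod>z\<in>#{#a, b, c#}. [:-z, 1:]) = [:- (a * b * c), a * b + a * c + b * c, - (a + b + c), 1:]"
  by (simp add: algebra_simps)

lemma quartic_identity_coeffs:
  fixes h0 h1 h2 h3 h4 :: complex
  assumes "\<And>z. h0 + h1 * z + h2 * z^2 + h3 * z^3 + h4 * z^4 = 0"
  shows "h0 = 0 \<and> h1 = 0 \<and> h2 = 0 \<and> h3 = 0 \<and> h4 = 0"
proof -
  have "poly [:h0, h1, h2, h3, h4:] z = 0" for z
    using assms[of z] by (simp add: algebra_simps power2_eq_square power3_eq_cube power4_eq_xxxx)
  then have "[:h0, h1, h2, h3, h4:] = 0" using poly_all_0_iff_0 by blast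
  then show ?thesis by simp
qed

lemma continuous_eq_off_finite:
  fixes h :: "'a::{real_normed_vector, perfect_space} \<Rightarrow> 'b::t1_space"
  assumes "continuous_on UNIV h" and "finite S" and "\<And>x. x \<notin> S \<Longrightarrow> h x = a"
  shows "h x = a"
proof (rule continuous_constant_on_closure[of "- S" h a x])
  have "closure (- S) = UNIV" using \<open>finite S\<close> by (simp add: closure_complement empty_interior_finite)
  then show "continuous_on (closure (- S)) h" "x \<in> closure (- S)" using assms(1) by simp_all
qed (use assms(3) in auto)

section \<open>The symmetric functions of the multipliers\<close>

lemma mult_fin_at_fixpoint:
  assumes fixed: "poly P z = z * poly Q z" and Qz: "poly Q z \<noteq> 0"
  shows "mult_fin (P, Q) z = (poly (pderiv P) z - z * poly (pderiv Q) z) / poly Q z"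
proof -
  have "((\<lambda>w. poly P w / poly Q w) has_field_derivative
      (poly (pderiv P) z * poly Q z - poly P z * poly (pderiv Q) z) / (poly Q z * poly Q z)) (at z)"
    using Qz by (intro DERIV_divide poly_DERIV)
  then have "mult_fin (P, Q) z
      = (poly (pderiv P) z * poly Q z - poly P z * poly (pderiv Q) z) / (poly Q z * poly Q z)"
    unfolding mult_fin_def by (simp add: DERIV_imp_deriv)
  also have "\<dots> = (poly (pderiv P) z - z * poly (pderiv Q) z) * poly Q z / (poly Q z * poly Q z)"
    by (simp add: fixed algebra_simps)
  finally show ?thesis using Qz by simp
qed

lemma mult_inf_quadratic:
  fixes p0 p1 p2 q0 q1 :: complex
  assumes "p2 \<noteq> 0"
  shows "mult_inf ([:p0, p1, p2:], [:q0, q1:]) = q1 / p2"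
proof -
  have chart: "(\<lambda>w. if w = 0 then 0 else poly [:q0, q1:] (1 / w) / poly [:p0, p1, p2:] (1 / w))
     = (\<lambda>w. (q0 * w^2 + q1 * w) / (p0 * w^2 + p1 * w + p2))"
  proof
    fix w :: complex
    show "(if w = 0 then 0 else poly [:q0, q1:] (1 / w) / poly [:p0, p1, p2:] (1 / w))
       = (q0 * w^2 + q1 * w) / (p0 * w^2 + p1 * w + p2)"
    proof (cases "w = 0")
      case False
      have "poly [:q0, q1:] (1 / w) = (q0 * w^2 + q1 * w) / w^2"
        and "poly [:p0, p1, p2:] (1 / w) = (p0 * w^2 + p1 * w + p2) / w^2"
        using False by (simp_all add: field_simps power2_eq_square)
      then have "poly [:q0, q1:] (1 / w) / poly [:p0, p1, p2:] (1 / w)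
          = ((q0 * w^2 + q1 * w) / w^2) / ((p0 * w^2 + p1 * w + p2) / w^2)"
        by simp
      also have "\<dots> = (q0 * w^2 + q1 * w) / (p0 * w^2 + p1 * w + p2)"
        using False by (simp add: divide_divide_eq_left divide_divide_eq_right)
      finally show ?thesis using False by simp
    qed simp
  qed
  have "((\<lambda>w. (q0 * w^2 + q1 * w) / (p0 * w^2 + p1 * w + p2)) has_field_derivative q1 / p2) (at 0)"
    using assms by (auto intro!: derivative_eq_intros simp: power2_eq_square field_simps)
  then show ?thesis unfolding mult_inf_def fst_conv snd_conv chart by (rule DERIV_imp_deriv)
qed

definition quad_resultant :: "complex \<Rightarrow> complex \<Rightarrow> complex \<Rightarrow> complex \<Rightarrow> complex \<Rightarrow> complex \<Rightarrow> complex" where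
  "quad_resultant p0 p1 p2 q0 q1 q2 = (p2 * q0 - p0 * q2)^2 - (p2 * q1 - p1 * q2) * (p1 * q0 - p0 * q1)"

text \<open>\<open>\<sigma>1\<close> and \<open>\<sigma>2\<close> are \<open>sigma1_num / quad_resultant\<close> and \<open>sigma2_num / quad_resultant\<close>
  (lemma \<open>sigma_formula\<close>).\<close>

definition sigma1_num :: "complex \<Rightarrow> complex \<Rightarrow> complex \<Rightarrow> complex \<Rightarrow> complex \<Rightarrow> complex \<Rightarrow> complex" where
  "sigma1_num p0 p1 p2 q0 q1 q2 =
     2 * p2^2 * q0^2 - p1 * q0 * q1^2 + 4 * p1 * q0^2 * q2 - 2 * p1^2 * q0 * q2 - p1^2 * p2 * q1
     + p1^3 * q2 + p0 * q1^3 - 4 * p0 * q0 * q1 * q2 - 2 * p0 * p2 * q1^2 + 4 * p0 * p2 * q0 * q2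
     + 4 * p0 * p2^2 * q1 + 4 * p0 * p1 * q1 * q2 - 4 * p0 * p1 * p2 * q2 - 6 * p0^2 * q2^2"

definition sigma2_num :: "complex \<Rightarrow> complex \<Rightarrow> complex \<Rightarrow> complex \<Rightarrow> complex \<Rightarrow> complex \<Rightarrow> complex" where
  "sigma2_num p0 p1 p2 q0 q1 q2 =
     4 * q0^3 * q2 - q0^2 * q1^2 + 2 * p2 * q0^2 * q1 - 4 * p1 * q0^2 * q2 - p1 * p2 * q0 * q1
     + 2 * p1 * p2^2 * q0 - p1^2 * q1^2 + 5 * p1^2 * q0 * q2 - p1^2 * p2^2 - 2 * p1^3 * q2
     - 2 * p0 * q1^3 + 10 * p0 * q0 * q1 * q2 + 5 * p0 * p2 * q1^2 - 4 * p0 * p2 * q0 * q2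
     - 4 * p0 * p2^2 * q1 + 4 * p0 * p2^3 - 7 * p0 * p1 * q1 * q2 + 10 * p0 * p1 * p2 * q2
     + 12 * p0^2 * q2^2"

definition quad_fixpt_mult :: "complex \<Rightarrow> complex \<Rightarrow> complex \<Rightarrow> complex \<Rightarrow> complex \<Rightarrow> complex \<Rightarrow> complex" where
  "quad_fixpt_mult p1 p2 q0 q1 q2 z = (p1 + 2 * p2 * z - z * (q1 + 2 * q2 * z)) / (q0 + q1 * z + q2 * z^2)"

text \<open>The four cases of \<open>3, 2, 1, 0\<close> finite fixed points; the others lie at \<open>\<infinity>\<close>, where the
  multiplier is \<open>q1/p2\<close>.\<close>

lemma sigmas_three_finite_fixpoints:
  fixes p0 p1 p2 q0 q1 q2 z1 z2 z3 :: complex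
  assumes "q2 \<noteq> 0" and "p0 = q2 * z1 * z2 * z3" and "p1 = q0 - q2 * (z1 * z2 + z1 * z3 + z2 * z3)"
    and "p2 = q1 + q2 * (z1 + z2 + z3)" and "\<forall>z\<in>{z1, z2, z3}. q0 + q1 * z + q2 * z^2 \<noteq> 0"
  shows "quad_resultant p0 p1 p2 q0 q1 q2 \<noteq> 0 \<and>
    esym 1 {#quad_fixpt_mult p1 p2 q0 q1 q2 z1, quad_fixpt_mult p1 p2 q0 q1 q2 z2, quad_fixpt_mult p1 p2 q0 q1 q2 z3#}
      = sigma1_num p0 p1 p2 q0 q1 q2 / quad_resultant p0 p1 p2 q0 q1 q2 \<and>
    esym 2 {#quad_fixpt_mult p1 p2 q0 q1 q2 z1, quad_fixpt_mult p1 p2 q0 q1 q2 z2, quad_fixpt_mult p1 p2 q0 q1 q2 z3#}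
      = sigma2_num p0 p1 p2 q0 q1 q2 / quad_resultant p0 p1 p2 q0 q1 q2"
proof -
  define A where "A z = p1 + 2 * p2 * z - z * (q1 + 2 * q2 * z)" for z
  define B where "B z = q0 + q1 * z + q2 * z^2" for z
  have m: "quad_fixpt_mult p1 p2 q0 q1 q2 z = A z / B z" for z
    by (simp add: quad_fixpt_mult_def A_def B_def)
  have nz: "B z1 \<noteq> 0" "B z2 \<noteq> 0" "B z3 \<noteq> 0" using assms(5) by (simp_all add: B_def)
  have res: "quad_resultant p0 p1 p2 q0 q1 q2 = q2 * B z1 * B z2 * B z3"
    and num1: "sigma1_num p0 p1 p2 q0 q1 q2 = q2 * (A z1 * B z2 * B z3 + A z2 * B z1 * B z3 + A z3 * B z1 * B z2)"
    and num2: "sigma2_num p0 p1 p2 q0 q1 q2 = q2 * (A z1 * A z2 * B z3 + A z1 * A z3 * B z2 + A z2 * A z3 * B z1)"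
    unfolding quad_resultant_def sigma1_num_def sigma2_num_def A_def B_def using assms(2-4) by algebra+
  show ?thesis unfolding m esym_1_3 esym_2_3 res num1 num2 using assms(1) nz by (simp add: field_simps)
qed

lemma sigmas_two_finite_fixpoints:
  fixes p0 p1 p2 q0 q1 z1 z2 :: complex
  assumes "p2 \<noteq> 0" and "p2 \<noteq> q1" and "p0 = (p2 - q1) * z1 * z2" and "p1 = q0 - (p2 - q1) * (z1 + z2)"
    and "\<forall>z\<in>{z1, z2}. q0 + q1 * z \<noteq> 0"
  shows "quad_resultant p0 p1 p2 q0 q1 0 \<noteq> 0 \<and>
    esym 1 {#quad_fixpt_mult p1 p2 q0 q1 0 z1, quad_fixpt_mult p1 p2 q0 q1 0 z2, q1 / p2#}
      = sigma1_num p0 p1 p2 q0 q1 0 / quad_resultant p0 p1 p2 q0 q1 0 \<and>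
    esym 2 {#quad_fixpt_mult p1 p2 q0 q1 0 z1, quad_fixpt_mult p1 p2 q0 q1 0 z2, q1 / p2#}
      = sigma2_num p0 p1 p2 q0 q1 0 / quad_resultant p0 p1 p2 q0 q1 0"
proof -
  define c where "c = p2 - q1"
  define A where "A z = p1 + 2 * p2 * z - z * q1" for z
  define B where "B z = q0 + q1 * z" for z
  have m: "quad_fixpt_mult p1 p2 q0 q1 0 z = A z / B z" for z
    by (simp add: quad_fixpt_mult_def A_def B_def)
  have nz: "B z1 \<noteq> 0" "B z2 \<noteq> 0" "c \<noteq> 0" using assms(2,5) by (simp_all add: B_def c_def)
  have res: "quad_resultant p0 p1 p2 q0 q1 0 = c * p2 * B z1 * B z2"
    and num1: "sigma1_num p0 p1 p2 q0 q1 0 = c * (p2 * A z1 * B z2 + p2 * A z2 * B z1 + q1 * B z1 * B z2)"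
    and num2: "sigma2_num p0 p1 p2 q0 q1 0 = c * (p2 * A z1 * A z2 + q1 * A z1 * B z2 + q1 * A z2 * B z1)"
    \<comment> \<open>\<open>algebra\<close> fails on literal powers \<open>0\<^sup>2\<close>, hence \<open>power_zero_numeral\<close>.\<close>
    unfolding quad_resultant_def sigma1_num_def sigma2_num_def A_def B_def c_def power_zero_numeral
    using assms(3,4) by algebra+
  show ?thesis unfolding m esym_1_3 esym_2_3 res num1 num2 using assms(1) nz by (simp add: field_simps)
qed

lemma sigmas_one_finite_fixpoint:
  fixes p0 p1 q0 q1 z1 :: complex
  assumes "q1 \<noteq> 0" and "p1 \<noteq> q0" and "p0 = (q0 - p1) * z1" and "q0 + q1 * z1 \<noteq> 0"
  shows "quad_resultant p0 p1 q1 q0 q1 0 \<noteq> 0 \<and>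
    esym 1 {#quad_fixpt_mult p1 q1 q0 q1 0 z1, 1, 1#}
      = sigma1_num p0 p1 q1 q0 q1 0 / quad_resultant p0 p1 q1 q0 q1 0 \<and>
    esym 2 {#quad_fixpt_mult p1 q1 q0 q1 0 z1, 1, 1#}
      = sigma2_num p0 p1 q1 q0 q1 0 / quad_resultant p0 p1 q1 q0 q1 0"
proof -
  define A where "A = p1 + q1 * z1"
  define B where "B = q0 + q1 * z1"
  have m: "quad_fixpt_mult p1 q1 q0 q1 0 z1 = A / B"
    by (simp add: quad_fixpt_mult_def A_def B_def algebra_simps)
  have nz: "B \<noteq> 0" "q0 - p1 \<noteq> 0" using assms(2,4) by (simp_all add: B_def)
  have res: "quad_resultant p0 p1 q1 q0 q1 0 = (q0 - p1) * q1^2 * B"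
    and num1: "sigma1_num p0 p1 q1 q0 q1 0 = (q0 - p1) * q1^2 * (A + 2 * B)"
    and num2: "sigma2_num p0 p1 q1 q0 q1 0 = (q0 - p1) * q1^2 * (2 * A + B)"
    unfolding quad_resultant_def sigma1_num_def sigma2_num_def A_def B_def power_zero_numeral
    using assms(3) by algebra+
  show ?thesis unfolding m esym_1_3 esym_2_3 res num1 num2 using assms(1) nz by (simp add: field_simps)
qed

lemma sigmas_no_finite_fixpoint:
  fixes p0 q0 q1 :: complex
  assumes "p0 \<noteq> 0" and "q1 \<noteq> 0"
  shows "quad_resultant p0 q0 q1 q0 q1 0 \<noteq> 0 \<and>
    esym 1 {#1, 1, 1#} = sigma1_num p0 q0 q1 q0 q1 0 / quad_resultant p0 q0 q1 q0 q1 0 \<and>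
    esym 2 {#1, 1, 1#} = sigma2_num p0 q0 q1 q0 q1 0 / quad_resultant p0 q0 q1 q0 q1 0"
proof -
  have res: "quad_resultant p0 q0 q1 q0 q1 0 = q1^3 * p0"
    and num1: "sigma1_num p0 q0 q1 q0 q1 0 = 3 * (q1^3 * p0)"
    and num2: "sigma2_num p0 q0 q1 q0 q1 0 = 3 * (q1^3 * p0)"
    unfolding quad_resultant_def sigma1_num_def sigma2_num_def power_zero_numeral by algebra+
  then show ?thesis unfolding esym_1_3 esym_2_3 res num1 num2 using assms by simp
qed

lemma fp_multipliers_quadratic:
  fixes p0 p1 p2 q0 q1 q2 :: complex
  assumes R: "([:p0, p1, p2:], [:q0, q1, q2:]) \<in> Rat 2"
  defines "F \<equiv> [:p0, p1 - q0, p2 - q1, - q2:]"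
  shows "F \<noteq> 0" and "\<forall>z\<in>#proots F. q0 + q1 * z + q2 * z^2 \<noteq> 0"
    and "fp_multipliers ([:p0, p1, p2:], [:q0, q1, q2:])
       = image_mset (quad_fixpt_mult p1 p2 q0 q1 q2) (proots F)
         + replicate_mset (3 - degree F) (mult_inf ([:p0, p1, p2:], [:q0, q1, q2:]))"
proof -
  let ?P = "[:p0, p1, p2:]" and ?Q = "[:q0, q1, q2:]"
  have cop: "coprime ?P ?Q" and deg: "max (degree ?P) (degree ?Q) = 2"
    using R by (auto simp: Rat_def)
  have fixpoly: "fixpoly (?P, ?Q) = F" by (simp add: fixpoly_def F_def)
  have fixed: "poly ?P z = z * poly ?Q z" if "poly F z = 0" for z
    using that by (simp add: F_def algebra_simps)
  have Q_nz: "poly ?Q z \<noteq> 0" if "poly F z = 0" for z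
    using cop fixed[OF that] by (auto simp: coprime_iff_no_common_root)
  show "F \<noteq> 0"
  proof
    assume "F = 0"
    then have P_eq: "?P = [:0, 1:] * ?Q" by (simp add: F_def)
    then have "is_unit ?Q"
      by (intro coprime_common_divisor[OF cop]) (simp_all only: dvd_triv_right dvd_refl)
    then have "degree ?Q = 0" by (simp add: is_unit_pCons_iff)
    moreover have "degree ?P \<le> degree [:0, 1 :: complex:] + degree ?Q"
      unfolding P_eq by (rule degree_mult_le)
    ultimately show False using deg by simp
  qed
  then show roots: "\<forall>z\<in>#proots F. q0 + q1 * z + q2 * z^2 \<noteq> 0"
    using Q_nz by (simp add: algebra_simps power2_eq_square)
  have "mult_fin (?P, ?Q) z = quad_fixpt_mult p1 p2 q0 q1 q2 z" if "z \<in># proots F" for z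
    using mult_fin_at_fixpoint[OF fixed Q_nz] that \<open>F \<noteq> 0\<close>
    by (simp add: quad_fixpt_mult_def pderiv_pCons algebra_simps power2_eq_square)
  then show "fp_multipliers (?P, ?Q) = image_mset (quad_fixpt_mult p1 p2 q0 q1 q2) (proots F)
      + replicate_mset (3 - degree F) (mult_inf (?P, ?Q))"
    unfolding fp_multipliers_def fst_conv snd_conv fixpoly deg
      proots_sum_replicate_order[OF \<open>F \<noteq> 0\<close>]
    by (auto intro: image_mset_cong)
qed

lemma sigma_formula:
  fixes p0 p1 p2 q0 q1 q2 :: complex
  assumes R: "([:p0, p1, p2:], [:q0, q1, q2:]) \<in> Rat 2"
  shows "quad_resultant p0 p1 p2 q0 q1 q2 \<noteq> 0 \<and>
    sigma1 ([:p0, p1, p2:], [:q0, q1, q2:])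
      = sigma1_num p0 p1 p2 q0 q1 q2 / quad_resultant p0 p1 p2 q0 q1 q2 \<and>
    sigma2 ([:p0, p1, p2:], [:q0, q1, q2:])
      = sigma2_num p0 p1 p2 q0 q1 q2 / quad_resultant p0 p1 p2 q0 q1 q2"
proof -
  define F where "F = [:p0, p1 - q0, p2 - q1, - q2:]"
  have F_nz: "F \<noteq> 0" and roots: "\<forall>z\<in>#proots F. q0 + q1 * z + q2 * z^2 \<noteq> 0"
    and fpm: "fp_multipliers ([:p0, p1, p2:], [:q0, q1, q2:])
       = image_mset (quad_fixpt_mult p1 p2 q0 q1 q2) (proots F)
         + replicate_mset (3 - degree F) (mult_inf ([:p0, p1, p2:], [:q0, q1, q2:]))"
    using fp_multipliers_quadratic[OF R] unfolding F_def by blast+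
  have F_eq: "F = smult (lead_coeff F) (\<Prod>z\<in>#proots F. [:-z, 1:])"
    by (rule complex_poly_decompose_multiset[symmetric])
  have size_roots: "size (proots F) = degree F" by (rule size_proots_complex)
  have p2_nz: "p2 \<noteq> 0" if "q2 = 0"
    using R that by (auto simp: Rat_def split: if_splits)
  consider (three) "q2 \<noteq> 0" | (two) "q2 = 0" "p2 \<noteq> q1" | (one) "q2 = 0" "p2 = q1" "p1 \<noteq> q0"
    | (none) "q2 = 0" "p2 = q1" "p1 = q0" by blast
  then show ?thesis
  proof cases
    case three
    then have deg: "degree F = 3" and lc: "lead_coeff F = - q2" by (simp_all add: F_def)
    obtain z1 z2 z3 where roots3: "proots F = {#z1, z2, z3#}"
      using size_roots deg size_mset_3_obtain by metis
    have "F = smult (- q2) [:- (z1 * z2 * z3), z1 * z2 + z1 * z3 + z2 * z3, - (z1 + z2 + z3), 1:]"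
      using F_eq unfolding lc roots3 prod_linear_factors_3 .
    then have "p0 = q2 * z1 * z2 * z3" "p1 = q0 - q2 * (z1 * z2 + z1 * z3 + z2 * z3)"
      "p2 = q1 + q2 * (z1 + z2 + z3)"
      by (simp_all add: F_def algebra_simps)
    then show ?thesis using sigmas_three_finite_fixpoints[of q2] three roots fpm roots3 deg
      by (simp add: sigma1_def sigma2_def)
  next
    case two
    then have deg: "degree F = 2" and lc: "lead_coeff F = p2 - q1" by (simp_all add: F_def)
    obtain z1 z2 where roots2: "proots F = {#z1, z2#}"
      using size_roots deg size_mset_2_obtain by metis
    have "F = smult (p2 - q1) [:z1 * z2, - (z1 + z2), 1:]"
      using F_eq unfolding lc roots2 prod_linear_factors_2 .
    then have "p0 = (p2 - q1) * z1 * z2" "p1 = q0 - (p2 - q1) * (z1 + z2)"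
      using two by (simp_all add: F_def algebra_simps)
    then show ?thesis using sigmas_two_finite_fixpoints[of p2] two p2_nz roots fpm roots2 deg
      by (simp add: sigma1_def sigma2_def mult_inf_quadratic numeral_2_eq_2 add_mset_commute)
  next
    case one
    then have deg: "degree F = 1" and lc: "lead_coeff F = p1 - q0" by (simp_all add: F_def)
    obtain z1 where roots1: "proots F = {#z1#}"
      using size_roots deg size_1_singleton_mset by metis
    have "F = smult (p1 - q0) [:- z1, 1:]"
      using F_eq unfolding lc roots1 prod_linear_factors_1 .
    then have "p0 = (q0 - p1) * z1"
      using one by (simp add: F_def algebra_simps)
    then show ?thesis using sigmas_one_finite_fixpoint[of q1] one p2_nz roots fpm roots1 deg
      by (simp add: sigma1_def sigma2_def mult_inf_quadratic numeral_2_eq_2 add_mset_commute)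
  next
    case none
    then have "degree F = 0" "proots F = {#}" "p0 \<noteq> 0"
      using F_nz size_roots by (simp_all add: F_def)
    then show ?thesis using sigmas_no_finite_fixpoint[of p0 q1] none p2_nz fpm
      by (simp add: sigma1_def sigma2_def mult_inf_quadratic numeral_3_eq_3)
  qed
qed

section \<open>Automorphisms and the commutation form\<close>

definition homog2 :: "complex \<Rightarrow> complex \<Rightarrow> complex \<Rightarrow> complex \<Rightarrow> complex \<Rightarrow> complex" where
  "homog2 c0 c1 c2 x y = c0 * y^2 + c1 * x * y + c2 * x^2"

text \<open>With \<open>g = (az + b)/(cz + d)\<close> and \<open>f = P/Q\<close> in homogeneous coordinates, \<open>g \<circ> f = f \<circ> g\<close>
  says that \<open>[aP + bQ : cP + dQ]\<close> and \<open>[P \<circ> g : Q \<circ> g]\<close> agree; \<open>comm_form\<close> is the determinant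
  of these two vectors.\<close>

definition comm_form ::
  "complex \<Rightarrow> complex \<Rightarrow> complex \<Rightarrow> complex \<Rightarrow> complex \<Rightarrow> complex \<Rightarrow>
   complex \<Rightarrow> complex \<Rightarrow> complex \<Rightarrow> complex \<Rightarrow> complex \<Rightarrow> complex \<Rightarrow> complex" where
  "comm_form p0 p1 p2 q0 q1 q2 a b c d x y =
     (a * homog2 p0 p1 p2 x y + b * homog2 q0 q1 q2 x y) * homog2 q0 q1 q2 (a * x + b * y) (c * x + d * y)
   - (c * homog2 p0 p1 p2 x y + d * homog2 q0 q1 q2 x y) * homog2 p0 p1 p2 (a * x + b * y) (c * x + d * y)"

lemma comm_form_homogeneous:
  "comm_form p0 p1 p2 q0 q1 q2 a b c d (s * x) (s * y) = s^4 * comm_form p0 p1 p2 q0 q1 q2 a b c d x y"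
  unfolding comm_form_def homog2_def by algebra

lemma comm_form_eq_0_if_affine_eq_0:
  assumes "\<And>z. comm_form p0 p1 p2 q0 q1 q2 a b c d z 1 = 0"
  shows "comm_form p0 p1 p2 q0 q1 q2 a b c d x y = 0"
proof -
  have off_axis: "comm_form p0 p1 p2 q0 q1 q2 a b c d x y = 0" if "y \<noteq> 0" for x y
    using comm_form_homogeneous[of p0 p1 p2 q0 q1 q2 a b c d y "x / y" 1] that assms by simp
  have "continuous_on UNIV (comm_form p0 p1 p2 q0 q1 q2 a b c d 1)"
    unfolding comm_form_def homog2_def by (intro continuous_intros)
  then have "comm_form p0 p1 p2 q0 q1 q2 a b c d 1 y = 0" for y
    by (rule continuous_eq_off_finite[where S = "{0}"]) (use off_axis in auto)
  then show ?thesis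
    using off_axis comm_form_homogeneous[of p0 p1 p2 q0 q1 q2 a b c d x 1 0] by (cases "y = 0") simp_all
qed

lemma moebius_coeffs:
  assumes "g \<in> moebius"
  obtains a b c d where "a * d - b * c \<noteq> 0" and "g = rat_eval ([:b, a:], [:d, c:])"
proof -
  obtain A B where AB: "(A, B) \<in> Rat 1" "g = rat_eval (A, B)"
    using assms by (auto simp: moebius_def)
  have cop: "coprime A B" and deg: "max (degree A) (degree B) = 1"
    using AB(1) by (auto simp: Rat_def)
  define a b c d where "a = coeff A 1" "b = coeff A 0" "c = coeff B 1" "d = coeff B 0"
  have "degree A \<le> 1" "degree B \<le> 1" using deg by auto
  then have A_eq: "A = [:b, a:]" and B_eq: "B = [:d, c:]"
    unfolding a_b_c_d_def by (simp_all only: poly_eq_coeffs_degree_le_1[symmetric])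
  have "a * d - b * c \<noteq> 0"
  proof
    assume det: "a * d - b * c = 0"
    have "\<exists>z. poly A z = 0 \<and> poly B z = 0"
    proof (cases "c = 0")
      case False
      then show ?thesis using det by (intro exI[of _ "- d / c"]) (simp add: A_eq B_eq field_simps)
    next
      case True
      then have "a \<noteq> 0" using deg by (auto simp: A_eq B_eq split: if_splits)
      then have "d = 0" using det True by simp
      then show ?thesis using True \<open>a \<noteq> 0\<close> by (intro exI[of _ "- b / a"]) (simp add: A_eq B_eq field_simps)
    qed
    then show False using cop by (auto simp: coprime_iff_no_common_root)
  qed
  then show ?thesis using that AB(2) by (simp add: A_eq B_eq)
qed

lemma moebius_eval_None:
  assumes "a * d - b * c \<noteq> 0"
  shows "rat_eval ([:b, a:], [:d, c:]) None = (if c = 0 then None else Some (a / c))"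
  using assms by auto

lemma moebius_eval_None_neq_Some:
  assumes det: "a * d - b * c \<noteq> 0"
  shows "rat_eval ([:b, a:], [:d, c:]) None \<noteq> rat_eval ([:b, a:], [:d, c:]) (Some z)"
proof (cases "c = 0")
  case True
  then show ?thesis using det by (simp add: moebius_eval_None)
next
  case False
  have "a / c \<noteq> (b + z * a) / (d + z * c)" if "d + z * c \<noteq> 0"
  proof
    assume "a / c = (b + z * a) / (d + z * c)"
    then have "a * d - b * c = 0" using False that by (simp add: field_simps)
    then show False using det by simp
  qed
  then show ?thesis using False det by (simp add: moebius_eval_None)
qed

lemma moebius_eval_Some_inj:
  assumes det: "a * d - b * c \<noteq> 0"
    and eq: "rat_eval ([:b, a:], [:d, c:]) (Some z) = rat_eval ([:b, a:], [:d, c:]) (Some w)"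
  shows "z = w"
proof (cases "d + z * c = 0")
  case True
  then have "d + w * c = 0" and "c \<noteq> 0" using eq det by (auto split: if_splits)
  then show ?thesis using True by (metis add_left_cancel mult_right_cancel)
next
  case False
  then have "d + w * c \<noteq> 0" and "(b + z * a) / (d + z * c) = (b + w * a) / (d + w * c)"
    using eq by (auto split: if_splits)
  then have "(z - w) * (a * d - b * c) = 0" using False by (simp add: field_simps)
  then show ?thesis using det by simp
qed

lemma moebius_inj:
  assumes "a * d - b * c \<noteq> 0"
  shows "inj (rat_eval ([:b, a:], [:d, c:]))"
proof (rule injI)
  fix x y assume "rat_eval ([:b, a:], [:d, c:]) x = rat_eval ([:b, a:], [:d, c:]) y"
  then show "x = y"
    using moebius_eval_None_neq_Some[OF assms] moebius_eval_Some_inj[OF assms]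
    by (cases x; cases y) (auto simp del: rat_eval.simps, metis)
qed

lemma homog2_eq_poly:
  assumes "y \<noteq> 0"
  shows "homog2 c0 c1 c2 x y = y^2 * poly [:c0, c1, c2:] (x / y)"
  using assms by (simp add: homog2_def field_simps power2_eq_square)

lemma comm_form_eq_0_if_commute_at:
  fixes p0 p1 p2 q0 q1 q2 a b c d z :: complex
  defines "f \<equiv> rat_eval ([:p0, p1, p2:], [:q0, q1, q2:])" and "g \<equiv> rat_eval ([:b, a:], [:d, c:])"
  assumes comm: "g (f (Some z)) = f (g (Some z))"
    and Qz: "poly [:q0, q1, q2:] z \<noteq> 0" and pole: "d + z * c \<noteq> 0"
  shows "comm_form p0 p1 p2 q0 q1 q2 a b c d z 1 = 0"
proof -
  let ?P = "[:p0, p1, p2:]" and ?Q = "[:q0, q1, q2:]"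
  define v where "v = poly ?P z / poly ?Q z"
  define w where "w = (b + z * a) / (d + z * c)"
  have gv_fw: "g (Some v) = f (Some w)"
    using comm Qz pole by (simp add: f_def g_def v_def w_def)
  have key: "(a * v + b) * poly ?Q w - (c * v + d) * poly ?P w = 0"
  proof (cases "poly ?Q w = 0")
    case True
    then have "c * v + d = 0" using gv_fw by (auto simp: f_def g_def algebra_simps split: if_splits)
    then show ?thesis using True by simp
  next
    case False
    then have "c * v + d \<noteq> 0" and "(a * v + b) / (c * v + d) = poly ?P w / poly ?Q w"
      using gv_fw by (auto simp: f_def g_def algebra_simps split: if_splits)
    then show ?thesis using False by (simp add: field_simps)
  qed
  have "homog2 r0 r1 r2 (a * z + b * 1) (c * z + d * 1) = (d + z * c)^2 * poly [:r0, r1, r2:] w" for r0 r1 r2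
    using homog2_eq_poly[OF pole] by (simp add: w_def algebra_simps)
  moreover have "homog2 r0 r1 r2 z 1 = poly [:r0, r1, r2:] z" for r0 r1 r2
    by (simp add: homog2_def algebra_simps power2_eq_square)
  moreover have "poly ?P z = v * poly ?Q z" using Qz by (simp add: v_def)
  ultimately have "comm_form p0 p1 p2 q0 q1 q2 a b c d z 1
      = poly ?Q z * (d + z * c)^2 * ((a * v + b) * poly ?Q w - (c * v + d) * poly ?P w)"
    unfolding comm_form_def by (simp add: algebra_simps)
  then show ?thesis using key by simp
qed

lemma automorphism_comm_form:
  fixes p0 p1 p2 q0 q1 q2 :: complex
  assumes R: "([:p0, p1, p2:], [:q0, q1, q2:]) \<in> Rat 2"
    and aut: "is_automorphism g (rat_eval ([:p0, p1, p2:], [:q0, q1, q2:]))"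
  obtains a b c d where "a * d - b * c \<noteq> 0" and "\<not> (b = 0 \<and> c = 0 \<and> a = d)"
    and "\<And>x y. comm_form p0 p1 p2 q0 q1 q2 a b c d x y = 0"
proof -
  let ?f = "rat_eval ([:p0, p1, p2:], [:q0, q1, q2:])"
  obtain a b c d where det: "a * d - b * c \<noteq> 0" and g_eq: "g = rat_eval ([:b, a:], [:d, c:])"
    using aut moebius_coeffs unfolding is_automorphism_def by blast
  have nontrivial: "\<not> (b = 0 \<and> c = 0 \<and> a = d)"
  proof
    assume "b = 0 \<and> c = 0 \<and> a = d"
    then have "g x = x" for x using det by (cases x) (simp_all add: g_eq)
    then show False using aut by (auto simp: is_automorphism_def)
  qed
  have comm: "g (?f x) = ?f (g x)" for x
  proof -
    have "?f (g x) = (g \<circ> ?f \<circ> inv g) (g x)" using aut by (simp add: is_automorphism_def)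
    also have "\<dots> = g (?f x)" using moebius_inj[OF det] by (simp add: g_eq)
    finally show ?thesis by simp
  qed
  have "[:q0, q1, q2:] \<noteq> 0" and "[:d, c:] \<noteq> 0"
    using R det by (auto simp: Rat_def is_unit_pCons_iff)
  then have exceptional: "finite ({z. poly [:q0, q1, q2:] z = 0} \<union> {z. poly [:d, c:] z = 0})"
    by (intro finite_UnI poly_roots_finite)
  have cont: "continuous_on UNIV (\<lambda>z. comm_form p0 p1 p2 q0 q1 q2 a b c d z 1)"
    unfolding comm_form_def homog2_def by (intro continuous_intros)
  have "comm_form p0 p1 p2 q0 q1 q2 a b c d z 1 = 0"
    if "z \<notin> {z. poly [:q0, q1, q2:] z = 0} \<union> {z. poly [:d, c:] z = 0}" for z
    using that comm[of "Some z"] unfolding g_eq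
    by (intro comm_form_eq_0_if_commute_at) (auto simp: algebra_simps)
  then have "comm_form p0 p1 p2 q0 q1 q2 a b c d z 1 = 0" for z
    using continuous_eq_off_finite[OF cont exceptional] by blast
  then show thesis using that det nontrivial comm_form_eq_0_if_affine_eq_0 by blast
qed

section \<open>The symmetry locus lies on a cubic\<close>

definition sym_curve :: "complex \<Rightarrow> complex \<Rightarrow> complex" where
  "sym_curve x y = - 2 * x^3 - x^2 * y + x^2 + 8 * x * y + 4 * y^2 - 12 * x - 12 * y + 36"

definition sigmas_on_curve :: "complex \<Rightarrow> complex \<Rightarrow> complex \<Rightarrow> complex \<Rightarrow> complex \<Rightarrow> complex \<Rightarrow> bool" where
  "sigmas_on_curve p0 p1 p2 q0 q1 q2 \<longleftrightarrow>
     sym_curve (sigma1_num p0 p1 p2 q0 q1 q2 / quad_resultant p0 p1 p2 q0 q1 q2)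
       (sigma2_num p0 p1 p2 q0 q1 q2 / quad_resultant p0 p1 p2 q0 q1 q2) = 0"

text \<open>Coefficients of \<open>(P(z - t) + t Q(z - t)) / Q(z - t)\<close>, the conjugate of \<open>P/Q\<close> by
  \<open>z \<mapsto> z + t\<close>; the conjugate by \<open>z \<mapsto> 1/z\<close> just reverses and swaps the coefficient lists.\<close>

definition shift_p0 :: "complex \<Rightarrow> complex \<Rightarrow> complex \<Rightarrow> complex \<Rightarrow> complex \<Rightarrow> complex \<Rightarrow> complex \<Rightarrow> complex" where
  "shift_p0 t p0 p1 p2 q0 q1 q2 = p0 - t * p1 + t^2 * p2 + t * (q0 - t * q1 + t^2 * q2)"

definition shift_p1 :: "complex \<Rightarrow> complex \<Rightarrow> complex \<Rightarrow> complex \<Rightarrow> complex \<Rightarrow> complex" where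
  "shift_p1 t p1 p2 q1 q2 = p1 - 2 * t * p2 + t * (q1 - 2 * t * q2)"

definition shift_p2 :: "complex \<Rightarrow> complex \<Rightarrow> complex \<Rightarrow> complex" where
  "shift_p2 t p2 q2 = p2 + t * q2"

definition shift_q0 :: "complex \<Rightarrow> complex \<Rightarrow> complex \<Rightarrow> complex \<Rightarrow> complex" where
  "shift_q0 t q0 q1 q2 = q0 - t * q1 + t^2 * q2"

definition shift_q1 :: "complex \<Rightarrow> complex \<Rightarrow> complex \<Rightarrow> complex" where
  "shift_q1 t q1 q2 = q1 - 2 * t * q2"

lemma shift_invariants:
  fixes t p0 p1 p2 q0 q1 q2 a b c d x y :: complex
  defines "P0 \<equiv> shift_p0 t p0 p1 p2 q0 q1 q2" and "P1 \<equiv> shift_p1 t p1 p2 q1 q2"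
    and "P2 \<equiv> shift_p2 t p2 q2" and "Q0 \<equiv> shift_q0 t q0 q1 q2" and "Q1 \<equiv> shift_q1 t q1 q2"
  shows "quad_resultant P0 P1 P2 Q0 Q1 q2 = quad_resultant p0 p1 p2 q0 q1 q2"
    and "sigma1_num P0 P1 P2 Q0 Q1 q2 = sigma1_num p0 p1 p2 q0 q1 q2"
    and "sigma2_num P0 P1 P2 Q0 Q1 q2 = sigma2_num p0 p1 p2 q0 q1 q2"
    and "comm_form P0 P1 P2 Q0 Q1 q2 (a + t * c) (b + t * d - t * (a + t * c)) c (d - t * c) x y
       = comm_form p0 p1 p2 q0 q1 q2 a b c d (x - t * y) y"
  unfolding assms quad_resultant_def sigma1_num_def sigma2_num_def comm_form_def homog2_def
    shift_p0_def shift_p1_def shift_p2_def shift_q0_def shift_q1_def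
  by algebra+

lemma swap_invariants:
  shows "quad_resultant q2 q1 q0 p2 p1 p0 = quad_resultant p0 p1 p2 q0 q1 q2"
    and "sigma1_num q2 q1 q0 p2 p1 p0 = sigma1_num p0 p1 p2 q0 q1 q2"
    and "sigma2_num q2 q1 q0 p2 p1 p0 = sigma2_num p0 p1 p2 q0 q1 q2"
    and "comm_form q2 q1 q0 p2 p1 p0 d c b a x y = - comm_form p0 p1 p2 q0 q1 q2 a b c d y x"
  unfolding quad_resultant_def sigma1_num_def sigma2_num_def comm_form_def homog2_def
  by algebra+

lemma sigmas_on_curve_shift_iff:
  "sigmas_on_curve (shift_p0 t p0 p1 p2 q0 q1 q2) (shift_p1 t p1 p2 q1 q2) (shift_p2 t p2 q2)
     (shift_q0 t q0 q1 q2) (shift_q1 t q1 q2) q2 \<longleftrightarrow> sigmas_on_curve p0 p1 p2 q0 q1 q2"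
  by (simp add: sigmas_on_curve_def shift_invariants)

lemma sigmas_on_curve_swap_iff:
  "sigmas_on_curve q2 q1 q0 p2 p1 p0 \<longleftrightarrow> sigmas_on_curve p0 p1 p2 q0 q1 q2"
  by (simp add: sigmas_on_curve_def swap_invariants)

lemma sigmas_on_curve_odd:
  assumes "quad_resultant p0 0 p2 0 q1 0 \<noteq> 0"
  shows "sigmas_on_curve p0 0 p2 0 q1 0"
proof -
  have res: "quad_resultant p0 0 p2 0 q1 0 = p0 * p2 * q1^2"
    and num1: "sigma1_num p0 0 p2 0 q1 0 = p0 * q1^3 - 2 * p0 * p2 * q1^2 + 4 * p0 * p2^2 * q1"
    and num2: "sigma2_num p0 0 p2 0 q1 0
      = - 2 * p0 * q1^3 + 5 * p0 * p2 * q1^2 - 4 * p0 * p2^2 * q1 + 4 * p0 * p2^3"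
    by (simp_all add: quad_resultant_def sigma1_num_def sigma2_num_def power2_eq_square)
  have "p0 \<noteq> 0" "p2 \<noteq> 0" "q1 \<noteq> 0" using assms res by auto
  then show ?thesis unfolding sigmas_on_curve_def sym_curve_def res num1 num2
    by (simp add: field_simps) algebra
qed

lemma sigmas_on_curve_inverse_square:
  assumes "quad_resultant p0 0 0 0 0 q2 \<noteq> 0"
  shows "sigmas_on_curve p0 0 0 0 0 q2"
proof -
  have res: "quad_resultant p0 0 0 0 0 q2 = p0^2 * q2^2"
    and num1: "sigma1_num p0 0 0 0 0 q2 = - 6 * (p0^2 * q2^2)"
    and num2: "sigma2_num p0 0 0 0 0 q2 = 12 * (p0^2 * q2^2)"
    by (simp_all add: quad_resultant_def sigma1_num_def sigma2_num_def power2_eq_square)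
  show ?thesis using assms unfolding sigmas_on_curve_def sym_curve_def res num1 num2 by simp
qed

lemma translation_commuting_degenerate:
  assumes ab: "a \<noteq> 0" "b \<noteq> 0" and comm: "\<And>z. comm_form p0 p1 p2 q0 q1 q2 a b 0 a z 1 = 0"
  shows "quad_resultant p0 p1 p2 q0 q1 q2 = 0"
proof -
  have "(a * b^2 * p0 * q2 - a * b^2 * p2 * q0 + a * b^2 * q0 * q1 + a^2 * b * p0 * q1
         - a^2 * b * p1 * q0 + a^2 * b * q0^2 + b^3 * q0 * q2)
     + (a * b^2 * p1 * q2 - a * b^2 * p2 * q1 + 2 * a * b^2 * q0 * q2 + a * b^2 * q1^2
         + 2 * a^2 * b * p0 * q2 - 2 * a^2 * b * p2 * q0 + 2 * a^2 * b * q0 * q1 + b^3 * q1 * q2) * z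
     + (3 * a * b^2 * q1 * q2 + a^2 * b * p1 * q2 - a^2 * b * p2 * q1 + 2 * a^2 * b * q0 * q2
         + a^2 * b * q1^2 + b^3 * q2^2) * z^2
     + (2 * a * b^2 * q2^2 + 2 * a^2 * b * q1 * q2) * z^3 + (a^2 * b * q2^2) * z^4 = 0" for z
    using comm[of z] unfolding comm_form_def homog2_def
    by (simp add: power2_eq_square power3_eq_cube power4_eq_xxxx; algebra)
  from quartic_identity_coeffs[OF this] have h:
    "a * b^2 * p0 * q2 - a * b^2 * p2 * q0 + a * b^2 * q0 * q1 + a^2 * b * p0 * q1
       - a^2 * b * p1 * q0 + a^2 * b * q0^2 + b^3 * q0 * q2 = 0"
    "a * b^2 * p1 * q2 - a * b^2 * p2 * q1 + 2 * a * b^2 * q0 * q2 + a * b^2 * q1^2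
       + 2 * a^2 * b * p0 * q2 - 2 * a^2 * b * p2 * q0 + 2 * a^2 * b * q0 * q1 + b^3 * q1 * q2 = 0"
    "3 * a * b^2 * q1 * q2 + a^2 * b * p1 * q2 - a^2 * b * p2 * q1 + 2 * a^2 * b * q0 * q2
       + a^2 * b * q1^2 + b^3 * q2^2 = 0"
    "a^2 * b * q2^2 = 0" by auto
  have q2: "q2 = 0" using h(4) ab by simp
  have "a^2 * b * (q1 * (q1 - p2)) = 0" using h(3) q2 by (simp add: algebra_simps power2_eq_square)
  then have e2: "q1 * (q1 - p2) = 0" using ab by simp
  have "a * b^2 * (q1 * (q1 - p2)) + 2 * a^2 * b * (q0 * (q1 - p2)) = 0"
    using h(2) q2 by (simp add: algebra_simps power2_eq_square)
  then have e1: "q0 * (q1 - p2) = 0" using e2 ab by simp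
  have "a * b^2 * (q0 * (q1 - p2)) + a^2 * b * (p0 * q1 - p1 * q0 + q0^2) = 0"
    using h(1) q2 by (simp add: algebra_simps power2_eq_square)
  then have e0: "p0 * q1 - p1 * q0 + q0^2 = 0" using e1 ab by simp
  show ?thesis
  proof (cases "q1 = p2")
    case True
    then have "quad_resultant p0 p1 p2 q0 q1 q2 = p2^2 * (p0 * q1 - p1 * q0 + q0^2)"
      using q2 by (simp add: quad_resultant_def power2_eq_square algebra_simps)
    then show ?thesis using e0 by simp
  next
    case False
    then show ?thesis using q2 e1 e2 by (simp add: quad_resultant_def)
  qed
qed

lemma diagonal_commuting_coeffs:
  assumes ad: "a \<noteq> d" "a \<noteq> 0" "d \<noteq> 0" and comm: "\<And>z. comm_form p0 p1 p2 q0 q1 q2 a 0 0 d z 1 = 0"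
  shows "p0 * q0 = 0" and "p2 * q2 = 0" and "(a + d) * (p0 * q1) = 0" and "(a + d) * (p1 * q2) = 0"
    and "(a^2 + a * d + d^2) * p0 * q2 + a * d * (p1 * q1 - p2 * q0) = 0"
proof -
  have "(a * d^2 * p0 * q0 - d^3 * p0 * q0) + (a^2 * d * p0 * q1 - d^3 * p0 * q1) * z
     + (a * d^2 * p2 * q0 - a * d^2 * p1 * q1 + a^2 * d * p1 * q1 - a^2 * d * p2 * q0
         + a^3 * p0 * q2 - d^3 * p0 * q2) * z^2
     + (a^3 * p1 * q2 - a * d^2 * p1 * q2) * z^3 + (a^3 * p2 * q2 - a^2 * d * p2 * q2) * z^4 = 0" for z
    using comm[of z] unfolding comm_form_def homog2_def
    by (simp add: power2_eq_square power3_eq_cube power4_eq_xxxx; algebra)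
  from quartic_identity_coeffs[OF this] have h:
    "d^2 * (a - d) * (p0 * q0) = 0" "d * (a - d) * ((a + d) * (p0 * q1)) = 0"
    "(a - d) * ((a^2 + a * d + d^2) * p0 * q2 + a * d * (p1 * q1 - p2 * q0)) = 0"
    "a * (a - d) * ((a + d) * (p1 * q2)) = 0" "a^2 * (a - d) * (p2 * q2) = 0"
    by (simp_all add: algebra_simps power2_eq_square power3_eq_cube)
  then show "p0 * q0 = 0" and "p2 * q2 = 0" and "(a + d) * (p0 * q1) = 0" and "(a + d) * (p1 * q2) = 0"
    and "(a^2 + a * d + d^2) * p0 * q2 + a * d * (p1 * q1 - p2 * q0) = 0"
    using ad by simp_all
qed

lemma involution_commuting_on_curve:
  assumes res: "quad_resultant p0 p1 p2 q0 q1 q2 \<noteq> 0"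
    and e: "p0 * q0 = 0" "p2 * q2 = 0" "p1 * q1 = p0 * q2 + p2 * q0"
  shows "sigmas_on_curve p0 p1 p2 q0 q1 q2"
proof (cases "p0 = 0")
  case True
  then have "p2 = 0" using res e by (auto simp: quad_resultant_def power2_eq_square algebra_simps)
  moreover have "p1 \<noteq> 0" using res True \<open>p2 = 0\<close> by (auto simp: quad_resultant_def)
  ultimately have "q1 = 0" using e(3) True by simp
  then show ?thesis
    using sigmas_on_curve_odd[of q2 q0 p1] sigmas_on_curve_swap_iff[of q2 0 q0 0 p1 0]
      swap_invariants(1)[of 0 p1 0 q0 0 q2] res True \<open>p2 = 0\<close>
    by simp
next
  case False
  then have "q0 = 0" using e(1) by simp
  then have "q2 = 0" using res e by (auto simp: quad_resultant_def power2_eq_square algebra_simps)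
  moreover have "q1 \<noteq> 0" using res \<open>q0 = 0\<close> \<open>q2 = 0\<close> by (auto simp: quad_resultant_def)
  ultimately have "p1 = 0" using e(3) \<open>q0 = 0\<close> by simp
  then show ?thesis using sigmas_on_curve_odd res \<open>q0 = 0\<close> \<open>q2 = 0\<close> by simp
qed

lemma diagonal_commuting_on_curve:
  assumes res: "quad_resultant p0 p1 p2 q0 q1 q2 \<noteq> 0" and ad: "a \<noteq> d" "a \<noteq> 0" "d \<noteq> 0"
    and comm: "\<And>z. comm_form p0 p1 p2 q0 q1 q2 a 0 0 d z 1 = 0"
  shows "sigmas_on_curve p0 p1 p2 q0 q1 q2"
proof -
  note e = diagonal_commuting_coeffs[OF ad comm]
  show ?thesis
  proof (cases "d = - a")
    case True
    then have "a^2 * (p0 * q2 - p1 * q1 + p2 * q0) = 0"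
      using e(5) by (simp add: algebra_simps power2_eq_square)
    then have "p0 * q2 - p1 * q1 + p2 * q0 = 0" using ad by simp
    then have "p1 * q1 = p0 * q2 + p2 * q0" by (simp add: algebra_simps)
    then show ?thesis using involution_commuting_on_curve res e(1,2) by blast
  next
    case False
    then have "a + d \<noteq> 0" by (simp add: add_eq_0_iff)
    then have e': "p0 * q1 = 0" "p1 * q2 = 0" using e(3,4) by simp_all
    show ?thesis
    proof (cases "p0 = 0")
      case True
      then have "p1 * q1 = p2 * q0" using e(5) ad by simp
      then have "quad_resultant p0 p1 p2 q0 q1 q2 = 0"
        using True e(2) e'(2) by (auto simp: quad_resultant_def power2_eq_square algebra_simps)
      then show ?thesis using res by simp
    next
      case False
      then have "q0 = 0" "q1 = 0" using e(1) e'(1) by simp_all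
      moreover from this have "q2 \<noteq> 0" using res by (auto simp: quad_resultant_def)
      moreover from this have "p1 = 0" "p2 = 0" using e(2) e'(2) by simp_all
      ultimately show ?thesis using sigmas_on_curve_inverse_square res by simp
    qed
  qed
qed

lemma affine_commuting_on_curve:
  assumes res: "quad_resultant p0 p1 p2 q0 q1 q2 \<noteq> 0" and ad: "a \<noteq> 0" "d \<noteq> 0"
    and nontrivial: "\<not> (b = 0 \<and> a = d)" and comm: "\<And>x y. comm_form p0 p1 p2 q0 q1 q2 a b 0 d x y = 0"
  shows "sigmas_on_curve p0 p1 p2 q0 q1 q2"
proof (cases "a = d")
  case True
  then show ?thesis using translation_commuting_degenerate[of a b] ad nontrivial comm res by auto
next
  case False
  \<comment> \<open>Shifting the finite fixed point \<open>-t\<close> of \<open>g\<close> to \<open>0\<close> makes \<open>g\<close> diagonal.\<close>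
  define t where "t = b / (a - d)"
  have "b + t * d - t * (a + t * 0) = 0" using False by (simp add: t_def field_simps)
  then have "comm_form (shift_p0 t p0 p1 p2 q0 q1 q2) (shift_p1 t p1 p2 q1 q2) (shift_p2 t p2 q2)
      (shift_q0 t q0 q1 q2) (shift_q1 t q1 q2) q2 a 0 0 d z 1 = 0" for z
    using shift_invariants(4)[of t p0 p1 p2 q0 q1 q2 a 0 b d z 1] comm by simp
  moreover have "quad_resultant (shift_p0 t p0 p1 p2 q0 q1 q2) (shift_p1 t p1 p2 q1 q2)
      (shift_p2 t p2 q2) (shift_q0 t q0 q1 q2) (shift_q1 t q1 q2) q2 \<noteq> 0"
    using res by (simp add: shift_invariants)
  ultimately have "sigmas_on_curve (shift_p0 t p0 p1 p2 q0 q1 q2) (shift_p1 t p1 p2 q1 q2)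
      (shift_p2 t p2 q2) (shift_q0 t q0 q1 q2) (shift_q1 t q1 q2) q2"
    using diagonal_commuting_on_curve[OF _ False ad] by blast
  then show ?thesis by (simp only: sigmas_on_curve_shift_iff)
qed

lemma automorphism_commuting_on_curve:
  assumes res: "quad_resultant p0 p1 p2 q0 q1 q2 \<noteq> 0" and det: "a * d - b * c \<noteq> 0"
    and nontrivial: "\<not> (b = 0 \<and> c = 0 \<and> a = d)"
    and comm: "\<And>x y. comm_form p0 p1 p2 q0 q1 q2 a b c d x y = 0"
  shows "sigmas_on_curve p0 p1 p2 q0 q1 q2"
proof (cases "c = 0")
  case True
  then have "a \<noteq> 0" "d \<noteq> 0" "\<not> (b = 0 \<and> a = d)" using det nontrivial by auto
  then show ?thesis using affine_commuting_on_curve[OF res _ _ _ comm[unfolded True]] by blast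
next
  case False
  \<comment> \<open>Shift a fixed point \<open>r\<close> of \<open>g\<close> to \<open>0\<close>, then swap \<open>0\<close> and \<open>\<infinity>\<close>: \<open>g\<close> becomes affine.\<close>
  obtain r where "poly [:-b, d - a, c:] r = 0"
    using alg_closed_imp_poly_has_root[of "[:-b, d - a, c:]"] False by auto
  define t where "t = - r"
  have fixed: "b + t * d - t * (a + t * c) = 0"
    using \<open>poly [:-b, d - a, c:] r = 0\<close> by (simp add: t_def algebra_simps)
  define P0 P1 P2 Q0 Q1 where "P0 = shift_p0 t p0 p1 p2 q0 q1 q2" "P1 = shift_p1 t p1 p2 q1 q2"
    "P2 = shift_p2 t p2 q2" "Q0 = shift_q0 t q0 q1 q2" "Q1 = shift_q1 t q1 q2"
  note shifted = shift_invariants[of t p0 p1 p2 q0 q1 q2, folded P0_P1_P2_Q0_Q1_def]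
  have "comm_form P0 P1 P2 Q0 Q1 q2 (a + t * c) 0 c (d - t * c) x y = 0" for x y
    using shifted(4)[of a c b d] comm fixed by simp
  then have "comm_form q2 Q1 Q0 P2 P1 P0 (d - t * c) c 0 (a + t * c) x y = 0" for x y
    using swap_invariants(4)[of P0 P1 P2 Q0 Q1 q2 "a + t * c" 0 c "d - t * c" y x] by simp
  moreover have "quad_resultant q2 Q1 Q0 P2 P1 P0 \<noteq> 0"
    using res swap_invariants(1)[of P0 P1 P2 Q0 Q1 q2] shifted(1) by simp
  moreover have "d - t * c \<noteq> 0" "a + t * c \<noteq> 0"
  proof -
    have "(a + t * c) * (d - t * c) = a * d - b * c + c * (b + t * d - t * (a + t * c))"
      by (simp add: algebra_simps)
    then show "d - t * c \<noteq> 0" "a + t * c \<noteq> 0" using det fixed by auto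
  qed
  ultimately have "sigmas_on_curve q2 Q1 Q0 P2 P1 P0"
    using affine_commuting_on_curve False by blast
  then have "sigmas_on_curve P0 P1 P2 Q0 Q1 q2"
    unfolding sigmas_on_curve_swap_iff[of P0 P1 P2 Q0 Q1 q2] .
  then show ?thesis
    unfolding P0_P1_P2_Q0_Q1_def sigmas_on_curve_shift_iff .
qed

lemma Rat_2_obtain_coeffs:
  assumes "(P, Q) \<in> Rat 2"
  obtains p0 p1 p2 q0 q1 q2 where "P = [:p0, p1, p2:]" and "Q = [:q0, q1, q2:]"
proof -
  have "degree P \<le> 2" "degree Q \<le> 2" using assms by (auto simp: Rat_def)
  then show thesis using that[OF poly_eq_coeffs_degree_le_2 poly_eq_coeffs_degree_le_2] by blast
qed

lemma symmetry_locus_subset_sym_curve: "symmetry_locus \<subseteq> {(x, y). sym_curve x y = 0}"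
proof
  fix s assume "s \<in> symmetry_locus"
  then obtain P Q g where s: "s = (sigma1 (P, Q), sigma2 (P, Q))" and R: "(P, Q) \<in> Rat 2"
    and aut: "is_automorphism g (rat_eval (P, Q))"
    unfolding symmetry_locus_def by auto
  obtain p0 p1 p2 q0 q1 q2 where P: "P = [:p0, p1, p2:]" and Q: "Q = [:q0, q1, q2:]"
    using R by (rule Rat_2_obtain_coeffs)
  obtain a b c d where det: "a * d - b * c \<noteq> 0" and nontrivial: "\<not> (b = 0 \<and> c = 0 \<and> a = d)"
    and comm: "\<And>x y. comm_form p0 p1 p2 q0 q1 q2 a b c d x y = 0"
    using automorphism_comm_form[OF R[unfolded P Q] aut[unfolded P Q]] by metis
  note sigmas = sigma_formula[OF R[unfolded P Q]]
  then have "sigmas_on_curve p0 p1 p2 q0 q1 q2"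
    using automorphism_commuting_on_curve[OF _ det nontrivial comm] by blast
  then show "s \<in> {(x, y). sym_curve x y = 0}"
    using sigmas unfolding s P Q sigmas_on_curve_def by simp
qed

section \<open>The symmetry locus is the whole parametrized cubic\<close>

definition sym_param :: "complex \<Rightarrow> complex \<times> complex" where
  "sym_param k = (4 * k - 2 + 1 / k, 4 * k ^ 2 - 4 * k + 5 - 2 / k)"

lemma sym_curve_sym_param:
  assumes "k \<noteq> 0"
  shows "sym_curve (4 * k - 2 + 1 / k) (4 * k ^ 2 - 4 * k + 5 - 2 / k) = 0"
  unfolding sym_curve_def using assms by (simp add: field_simps) algebra

lemma sym_curve_imp_sym_param:
  assumes "sym_curve x y = 0"
  obtains k where "k \<noteq> 0" and "(x, y) = sym_param k"
proof (cases "x = -6")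
  case True
  then have "4 * (y - 12)^2 = 0" using assms unfolding sym_curve_def by algebra
  then show ?thesis using True that[of "-1/2"] by (simp add: sym_param_def power2_eq_square)
next
  case False
  then have x6: "x + 6 \<noteq> 0" by (metis add_eq_0_iff2 neg_equal_iff_equal)
  \<comment> \<open>Away from the cusp the parameter is recovered as \<open>(y + 2x)/(x + 6)\<close>.\<close>
  define k where "k = (y + 2 * x) / (x + 6)"
  have y: "y + 2 * x = k * (x + 6)" using x6 by (simp add: k_def)
  have "sym_curve x y = 4 * (y + 2 * x)^2 - (x + 2) * (x + 6) * (y + 2 * x) + (x + 6)^2"
    unfolding sym_curve_def by algebra
  then have "(x + 6)^2 * (4 * k^2 - (x + 2) * k + 1) = 0" using assms unfolding y by algebra
  then have quadratic: "4 * k^2 - (x + 2) * k + 1 = 0" using x6 by simp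
  then have "k \<noteq> 0" by auto
  then have "x = 4 * k - 2 + 1 / k" using quadratic by (simp add: field_simps) algebra
  moreover have "y = 4 * k ^ 2 - 4 * k + 5 - 2 / k"
  proof -
    have "y = k * (x + 6) - 2 * x" using y by (simp add: eq_diff_eq)
    also have "\<dots> = 4 * k ^ 2 - 4 * k + 5 - 2 / k"
      unfolding \<open>x = 4 * k - 2 + 1 / k\<close> using \<open>k \<noteq> 0\<close> by (simp add: field_simps) algebra
    finally show ?thesis .
  qed
  ultimately show ?thesis using that \<open>k \<noteq> 0\<close> by (simp add: sym_param_def)
qed

lemma sym_param_image: "sym_param ` (UNIV - {0}) = {(x, y). sym_curve x y = 0}"
proof
  show "sym_param ` (UNIV - {0}) \<subseteq> {(x, y). sym_curve x y = 0}"
    using sym_curve_sym_param by (auto simp: sym_param_def)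
  show "{(x, y). sym_curve x y = 0} \<subseteq> sym_param ` (UNIV - {0})"
  proof safe
    fix x y assume "sym_curve x y = 0"
    then obtain k where "k \<noteq> 0" "(x, y) = sym_param k" by (rule sym_curve_imp_sym_param)
    then show "(x, y) \<in> sym_param ` (UNIV - {0})" by blast
  qed
qed

lemma inj_on_sym_param: "inj_on sym_param (UNIV - {0})"
proof (rule inj_onI)
  fix k l :: complex
  assume "k \<in> UNIV - {0}" "l \<in> UNIV - {0}" and eq: "sym_param k = sym_param l"
  then have "k \<noteq> 0" "l \<noteq> 0" by auto
  have "4 * k - 2 + 1 / k = 4 * l - 2 + 1 / l"
    using eq by (simp add: sym_param_def)
  then have e1: "(k - l) * (4 * k * l - 1) = 0"
    using \<open>k \<noteq> 0\<close> \<open>l \<noteq> 0\<close> by (simp add: field_simps; algebra)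
  have "4 * k ^ 2 - 4 * k + 5 - 2 / k = 4 * l ^ 2 - 4 * l + 5 - 2 / l"
    using eq by (simp add: sym_param_def)
  then have e2: "(k - l) * (4 * k * l * (k + l) - 4 * k * l + 2) = 0"
    using \<open>k \<noteq> 0\<close> \<open>l \<noteq> 0\<close> by (simp add: field_simps) algebra
  show "k = l"
  proof (rule ccontr)
    assume "k \<noteq> l"
    then have "4 * k * l = 1" "4 * k * l * (k + l) - 4 * k * l + 2 = 0" using e1 e2 by auto
    then have "(k - l)^2 = 0" by algebra
    then show False using \<open>k \<noteq> l\<close> by simp
  qed
qed

lemma negation_automorphism:
  assumes "k \<noteq> 0"
  shows "is_automorphism (rat_eval ([:0, -1:], [:1:])) (rat_eval ([:k, 0, k:], [:0, 1:]))"
proof -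
  define g where "g = rat_eval ([:0, -1:], [:1:])"
  let ?f = "rat_eval ([:k, 0, k:], [:0, 1:])"
  have g_Some: "g (Some z) = Some (- z)" and g_None: "g None = None" for z
    by (simp_all add: g_def)
  have "g (g x) = x" for x by (cases x) (simp_all add: g_Some g_None)
  then have inv_g: "inv g = g" by (intro inv_unique_comp) (auto simp: fun_eq_iff)
  have "([:0, -1:], [:1:]) \<in> Rat 1" by (simp add: Rat_def coprime_iff_no_common_root)
  then have "g \<in> moebius" unfolding moebius_def g_def by (rule imageI)
  moreover have "g \<noteq> id"
  proof
    assume "g = id"
    then show False using g_Some[of 1] by simp
  qed
  moreover have "g \<circ> ?f \<circ> inv g = ?f"
  proof
    have f_Some: "?f (Some z) = (if z = 0 then None else Some (k * (1 + z^2) / z))" for z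
      by (simp add: algebra_simps power2_eq_square)
    have f_None: "?f None = None" using assms by simp
    fix x show "(g \<circ> ?f \<circ> inv g) x = ?f x"
      by (cases x) (simp_all add: inv_g g_Some g_None f_Some f_None del: rat_eval.simps)
  qed
  ultimately show ?thesis unfolding g_def is_automorphism_def by blast
qed

lemma sym_param_in_symmetry_locus:
  assumes "k \<noteq> 0"
  shows "sym_param k \<in> symmetry_locus"
proof -
  let ?f = "([:k, 0, k:], [:0, 1:])"
  have "coprime [:0, 1:] [:k, 0, k:]"
    using assms by (simp add: coprime_iff_no_common_root)
  then have R: "?f \<in> Rat 2"
    using assms by (simp add: Rat_def coprime_commute)
  have res: "quad_resultant k 0 k 0 1 0 = k^2"
    by (simp add: quad_resultant_def power2_eq_square)
  have sigmas: "sigma1 ?f = sigma1_num k 0 k 0 1 0 / k^2" "sigma2 ?f = sigma2_num k 0 k 0 1 0 / k^2"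
    using sigma_formula[of k 0 k 0 1 0] R by (simp_all add: res)
  have "sigma1 ?f = 4 * k - 2 + 1 / k"
    unfolding sigmas(1) using assms by (simp add: sigma1_num_def field_simps power2_eq_square)
  moreover have "sigma2 ?f = 4 * k ^ 2 - 4 * k + 5 - 2 / k"
    unfolding sigmas(2) using assms by (simp add: sigma2_num_def field_simps power2_eq_square; algebra)
  ultimately show ?thesis
    using R negation_automorphism[OF assms] unfolding symmetry_locus_def sym_param_def by force
qed

lemma symmetry_locus_eq_sym_curve: "symmetry_locus = {(x, y). sym_curve x y = 0}"
proof
  show "{(x, y). sym_curve x y = 0} \<subseteq> symmetry_locus"
    unfolding sym_param_image[symmetric] using sym_param_in_symmetry_locus by blast
qed (rule symmetry_locus_subset_sym_curve)

section \<open>Degree, singular point and cusp\<close>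

definition sym_curve_coeffs :: "nat \<Rightarrow> nat \<Rightarrow> complex" where
  "sym_curve_coeffs i j =
     (if (i, j) = (3, 0) then -2 else if (i, j) = (2, 1) then -1 else if (i, j) = (2, 0) then 1
      else if (i, j) = (1, 1) then 8 else if (i, j) = (0, 2) then 4 else if (i, j) = (1, 0) then -12
      else if (i, j) = (0, 1) then -12 else if (i, j) = (0, 0) then 36 else 0)"

lemma sym_curve_coeffs_support:
  "{(i, j). sym_curve_coeffs i j \<noteq> 0} = {(3, 0), (2, 1), (2, 0), (1, 1), (0, 2), (1, 0), (0, 1), (0, 0)}"
  by (auto simp: sym_curve_coeffs_def split: if_splits)

lemma is_bipoly_sym_curve_coeffs: "is_bipoly sym_curve_coeffs"
  unfolding is_bipoly_def sym_curve_coeffs_support by simp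

lemma bpoly_eval_sym_curve_coeffs: "bpoly_eval sym_curve_coeffs = sym_curve"
  unfolding bpoly_eval_def sym_curve_coeffs_support
  by (intro ext) (simp add: sym_curve_coeffs_def sym_curve_def power2_eq_square power3_eq_cube algebra_simps)

lemma bdeg_sym_curve_coeffs: "bdeg sym_curve_coeffs = 3"
proof -
  have "{i + j |i j. sym_curve_coeffs i j \<noteq> 0} = (\<lambda>(i, j). i + j) ` {(i, j). sym_curve_coeffs i j \<noteq> 0}"
    by auto
  also have "\<dots> = {0, 1, 2, 3}" unfolding sym_curve_coeffs_support by auto
  finally show ?thesis unfolding bdeg_def by simp
qed

lemma zero_set_sym_curve_coeffs: "zero_set sym_curve_coeffs = {(x, y). sym_curve x y = 0}"
  by (simp add: zero_set_def bpoly_eval_sym_curve_coeffs)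

lemma bipoly_coeff_eq_0_above_bdeg:
  assumes "is_bipoly c" and "bdeg c < i + j"
  shows "c i j = 0"
proof (rule ccontr)
  assume "c i j \<noteq> 0"
  have "{i + j |i j. c i j \<noteq> 0} = (\<lambda>(i, j). i + j) ` {(i, j). c i j \<noteq> 0}" by auto
  then have "finite {i + j |i j. c i j \<noteq> 0}" using assms(1) by (simp add: is_bipoly_def)
  then have "i + j \<le> bdeg c" unfolding bdeg_def using \<open>c i j \<noteq> 0\<close> by (intro Max_ge) auto
  then show False using assms(2) by simp
qed

lemma bpoly_eval_bdeg_le_2:
  assumes "is_bipoly c" and "bdeg c \<le> 2"
  shows "bpoly_eval c x y = c 0 0 + c 1 0 * x + c 0 1 * y + c 2 0 * x^2 + c 1 1 * x * y + c 0 2 * y^2"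
proof -
  define T where "T = {(0::nat, 0::nat), (1, 0), (0, 1), (2, 0), (1, 1), (0, 2)}"
  have support: "{(i, j). c i j \<noteq> 0} \<subseteq> T"
  proof clarify
    fix i j assume "c i j \<noteq> 0"
    then have "i + j \<le> 2" using bipoly_coeff_eq_0_above_bdeg[OF assms(1)] assms(2) by force
    then show "(i, j) \<in> T" by (auto simp: T_def le_Suc_eq numeral_2_eq_2)
  qed
  have "bpoly_eval c x y = (\<Sum>(i, j)\<in>T. c i j * x ^ i * y ^ j)"
    unfolding bpoly_eval_def by (rule sum.mono_neutral_left) (use support in \<open>auto simp: T_def\<close>)
  also have "\<dots> = c 0 0 + c 1 0 * x + c 0 1 * y + c 2 0 * x^2 + c 1 1 * x * y + c 0 2 * y^2"
    unfolding T_def by (simp add: algebra_simps)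
  finally show ?thesis .
qed

lemma conic_containing_sym_curve_eq_0:
  assumes bipoly: "is_bipoly c" and deg: "bdeg c \<le> 2"
    and contains: "{(x, y). sym_curve x y = 0} \<subseteq> zero_set c"
  shows "c = (\<lambda>i j. 0)"
proof -
  define a0 where "a0 = 4 * c 0 2 - 2 * c 1 1 + c 2 0"
  define a1 where "a1 = - 2 * c 0 1 - 20 * c 0 2 + c 1 0 + 9 * c 1 1 - 4 * c 2 0"
  define a2 where "a2 = c 0 0 + 5 * c 0 1 + 41 * c 0 2 - 2 * c 1 0 - 22 * c 1 1 + 12 * c 2 0"
  define a3 where "a3 = - 4 * c 0 1 - 56 * c 0 2 + 4 * c 1 0 + 32 * c 1 1 - 16 * c 2 0"
  define a4 where "a4 = 4 * c 0 1 + 56 * c 0 2 - 24 * c 1 1 + 16 * c 2 0"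
  define a5 where "a5 = - 32 * c 0 2 + 16 * c 1 1"
  define a6 where "a6 = 16 * c 0 2"
  \<comment> \<open>\<open>poly p k = k^3 * c(sym_param k)\<close>, which vanishes for all \<open>k \<noteq> 0\<close>\<close>
  define p where "p = [:0, a0, a1, a2, a3, a4, a5, a6:]"
  have "poly p k = 0" for k
  proof (cases "k = 0")
    case False
    have "bpoly_eval c (4 * k - 2 + 1 / k) (4 * k ^ 2 - 4 * k + 5 - 2 / k) = 0"
      using contains sym_curve_sym_param[OF False] by (auto simp: zero_set_def)
    moreover have "poly p k = k^3 * bpoly_eval c (4 * k - 2 + 1 / k) (4 * k ^ 2 - 4 * k + 5 - 2 / k)"
      unfolding bpoly_eval_bdeg_le_2[OF bipoly deg] p_def a0_def a1_def a2_def a3_def a4_def a5_def a6_def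
      using False by (simp add: field_simps power2_eq_square power3_eq_cube)
    ultimately show ?thesis by simp
  qed (simp add: p_def)
  then have "p = 0" using poly_all_0_iff_0 by blast
  then have "a0 = 0" "a1 = 0" "a2 = 0" "a3 = 0" "a4 = 0" "a5 = 0" "a6 = 0" by (simp_all add: p_def)
  then have low: "c 0 2 = 0" "c 1 1 = 0" "c 2 0 = 0" "c 0 1 = 0" "c 1 0 = 0" "c 0 0 = 0"
    unfolding a0_def a1_def a2_def a3_def a4_def a5_def a6_def by auto
  show ?thesis
  proof (intro ext)
    fix i j
    show "c i j = 0"
    proof (cases "i + j \<le> 2")
      case True
      then have "(i, j) \<in> {(0, 0), (1, 0), (0, 1), (2, 0), (1, 1), (0, 2)}"
        by (auto simp: le_Suc_eq numeral_2_eq_2)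
      then show ?thesis using low by auto
    next
      case False
      then show ?thesis using bipoly_coeff_eq_0_above_bdeg[OF bipoly] deg by simp
    qed
  qed
qed

lemma deriv_sym_curve_x: "deriv (\<lambda>x. sym_curve x y) x = - 6 * x^2 - 2 * x * y + 2 * x + 8 * y - 12"
proof -
  have "((\<lambda>x. sym_curve x y) has_field_derivative (- 6 * x^2 - 2 * x * y + 2 * x + 8 * y - 12)) (at x)"
    unfolding sym_curve_def by (auto intro!: derivative_eq_intros simp: power2_eq_square algebra_simps)
  then show ?thesis by (rule DERIV_imp_deriv)
qed

lemma deriv_sym_curve_y: "deriv (\<lambda>y. sym_curve x y) y = 8 * x + 8 * y - 12 - x^2"
proof -
  have "((\<lambda>y. sym_curve x y) has_field_derivative (8 * x + 8 * y - 12 - x^2)) (at y)"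
    unfolding sym_curve_def by (auto intro!: derivative_eq_intros simp: power2_eq_square algebra_simps)
  then show ?thesis by (rule DERIV_imp_deriv)
qed

lemma singular_pt_sym_curve_iff: "singular_pt sym_curve_coeffs p \<longleftrightarrow> p = (-6, 12)"
proof -
  obtain x y where p: "p = (x, y)" by fastforce
  have "x = -6 \<and> y = 12"
    if curve: "sym_curve x y = 0" and dx: "- 6 * x^2 - 2 * x * y + 2 * x + 8 * y - 12 = 0"
      and dy: "8 * x + 8 * y - 12 - x^2 = 0"
  proof -
    have "x * (x + 6)^2 = 0" using dx dy by algebra
    then consider "x = 0" | "x = -6" by (auto simp: eq_neg_iff_add_eq_0)
    then show ?thesis
    proof cases
      case 1
      then have y: "y = 3 / 2" using dy by (simp add: field_simps)
      have "sym_curve x y = 27" unfolding 1 y by (simp add: sym_curve_def power2_eq_square power3_eq_cube)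
      then show ?thesis using curve by simp
    next
      case 2
      then show ?thesis using dy by (simp add: power2_eq_square)
    qed
  qed
  moreover have "sym_curve (-6) 12 = 0" by (simp add: sym_curve_def)
  ultimately show ?thesis
    unfolding p singular_pt_def bpoly_eval_sym_curve_coeffs deriv_sym_curve_x deriv_sym_curve_y
    by (auto simp: power2_eq_square)
qed

lemma higher_deriv_poly_at_0:
  fixes p :: "'a::real_normed_field poly"
  shows "(deriv ^^ n) (poly p) 0 = fact n * coeff p n"
proof (induction n arbitrary: p)
  case 0 then show ?case by (simp add: poly_0_coeff_0)
next
  case (Suc n)
  have "deriv (poly p) = poly (pderiv p)"
    by (rule ext, rule DERIV_imp_deriv, rule poly_DERIV)
  then have "(deriv ^^ Suc n) (poly p) 0 = fact n * coeff (pderiv p) n"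
    by (simp add: funpow_Suc_right Suc.IH del: funpow.simps)
  then show ?case by (simp add: coeff_pderiv algebra_simps)
qed

lemma dir_deriv_sym_curve_at_cusp:
  fixes v1 v2 :: complex
  shows "dir_deriv 2 sym_curve_coeffs (-6, 12) (v1, v2) = 2 * (5 * v1 + 2 * v2)^2"
    and "dir_deriv 3 sym_curve_coeffs (-6, 12) (v1, v2) = - 6 * v1^2 * (2 * v1 + v2)"
proof -
  have restriction: "(\<lambda>t. bpoly_eval sym_curve_coeffs (fst (-6, 12 :: complex) + t * fst (v1, v2))
      (snd (-6 :: complex, 12) + t * snd (v1, v2)))
     = poly [:0, 0, (5 * v1 + 2 * v2)^2, - (v1^2 * (2 * v1 + v2)):]"
    unfolding bpoly_eval_sym_curve_coeffs
    by (rule ext) (simp add: sym_curve_def power2_eq_square power3_eq_cube; algebra)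
  show "dir_deriv 2 sym_curve_coeffs (-6, 12) (v1, v2) = 2 * (5 * v1 + 2 * v2)^2"
    and "dir_deriv 3 sym_curve_coeffs (-6, 12) (v1, v2) = - 6 * v1^2 * (2 * v1 + v2)"
    unfolding dir_deriv_def restriction higher_deriv_poly_at_0 by (simp_all add: numeral_eq_Suc)
qed

lemma is_cusp_sym_curve: "is_cusp sym_curve_coeffs (-6, 12)"
  unfolding is_cusp_def
proof (intro conjI exI[of _ "(-2, 5)"] allI impI)
  show "singular_pt sym_curve_coeffs (-6, 12)" by (simp add: singular_pt_sym_curve_iff)
  show "dir_deriv 2 sym_curve_coeffs (-6, 12) (-2, 5) = 0"
    and "dir_deriv 3 sym_curve_coeffs (-6, 12) (-2, 5) \<noteq> 0"
    by (simp_all add: dir_deriv_sym_curve_at_cusp)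
  fix w :: "complex \<times> complex"
  assume "dir_deriv 2 sym_curve_coeffs (-6, 12) w = 0"
  then have "2 * snd w + 5 * fst w = 0"
    by (cases w) (simp add: dir_deriv_sym_curve_at_cusp algebra_simps)
  then show "\<exists>t. w = (t * fst (-2, 5), t * snd (-2, 5))"
    by (intro exI[of _ "- fst w / 2"]) (simp add: prod_eq_iff field_simps; algebra)
qed simp

lemma inverse_square_sigmas:
  "([:1:], [:0, 0, 1:]) \<in> Rat 2 \<and> (sigma1 ([:1:], [:0, 0, 1:]), sigma2 ([:1:], [:0, 0, 1:])) = (-6, 12)"
proof -
  have R: "([:1:], [:0, 0, 1:]) \<in> Rat 2" by (simp add: Rat_def coprime_iff_no_common_root)
  then show ?thesis using sigma_formula[of 1 0 0 0 0 1]
    by (simp add: quad_resultant_def sigma1_num_def sigma2_num_def)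
qed

theorem corollary5p3:
  shows "symmetry_locus =
           (\<lambda>k::complex. (4 * k - 2 + 1 / k, 4 * k ^ 2 - 4 * k + 5 - 2 / k)) ` (UNIV - {0}) \<and>
         inj_on (\<lambda>k::complex. (4 * k - 2 + 1 / k, 4 * k ^ 2 - 4 * k + 5 - 2 / k)) (UNIV - {0}) \<and>
         (\<exists>c. is_bipoly c \<and> bdeg c = 3 \<and> symmetry_locus = zero_set c \<and>
           (\<forall>c'. is_bipoly c' \<and> c' \<noteq> (\<lambda>i j. 0) \<and> symmetry_locus \<subseteq> zero_set c' \<longrightarrow> 3 \<le> bdeg c') \<and>
           {p. singular_pt c p} = {(-6, 12)} \<and> is_cusp c (-6, 12)) \<and>
         ([:1:], [:0, 0, 1:]) \<in> Rat 2 \<and>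
         (sigma1 ([:1:], [:0, 0, 1:]), sigma2 ([:1:], [:0, 0, 1:])) = (-6, 12) \<and>
         (\<lambda>k::complex. (4 * k - 2 + 1 / k, 4 * k ^ 2 - 4 * k + 5 - 2 / k)) (-1/2) = (-6, 12)"
proof -
  have param: "(\<lambda>k::complex. (4 * k - 2 + 1 / k, 4 * k ^ 2 - 4 * k + 5 - 2 / k)) = sym_param"
    by (simp add: fun_eq_iff sym_param_def)
  have minimal: "3 \<le> bdeg c'"
    if "is_bipoly c' \<and> c' \<noteq> (\<lambda>i j. 0) \<and> symmetry_locus \<subseteq> zero_set c'" for c'
  proof (rule ccontr)
    assume "\<not> 3 \<le> bdeg c'"
    then have "c' = (\<lambda>i j. 0)"
      using conic_containing_sym_curve_eq_0[of c'] that symmetry_locus_eq_sym_curve by simp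
    then show False using that by simp
  qed
  show ?thesis
    unfolding param
    by (intro conjI exI[of _ sym_curve_coeffs] allI impI minimal)
      (simp_all add: symmetry_locus_eq_sym_curve sym_param_image inj_on_sym_param inverse_square_sigmas
        is_bipoly_sym_curve_coeffs bdeg_sym_curve_coeffs zero_set_sym_curve_coeffs
        singular_pt_sym_curve_iff is_cusp_sym_curve power2_eq_square)
qed

end
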